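(* Let $P$ be an $n$-element poset written as $P=P_1+P_2+\cdots+P_k$ with each $P_i$ nonempty and not expressible as a disjoint sum of two nonempty posets. Suppose $|P_k|\ge|P_i|$ for all $i$, and that for some $0\le m\le k-1$ the components $P_1,\dots,P_m$ are singletons while none of $P_{m+1},\dots,P_{k-1}$ is a singleton. Then $\mathrm{ext}(P)\le \frac{n!}{n-m}$.
   Context: For a finite poset $P$, $\mathrm{ext}(P)$ denotes the number of linear extensions of $P$. The disjoint sum $P+Q$ of posets $P,Q$ is the poset on the disjoint union of their ground sets in which $x\le y$ iff $x,y$ lie in the same summand and are related there. *)

theory Defs
  imports Complex_Main
begin

text \<open>A finite poset is a carrier set A with a relation r satisfying partial_order_on A r
  (reflexive on A, transitive, antisymmetric, r contained in A times A).\<close>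

text \<open>Linear extensions: order-preserving bijections from A onto the positions 0..n-1
  (normalised to 0 outside A so that the set is finite).\<close>
definition linext :: "'a set \<Rightarrow> 'a rel \<Rightarrow> ('a \<Rightarrow> nat) set" where
  "linext A r = {f. bij_betw f A {0..<card A} \<and> (\<forall>x. x \<notin> A \<longrightarrow> f x = 0) \<and>
                   (\<forall>x\<in>A. \<forall>y\<in>A. (x, y) \<in> r \<longrightarrow> f x \<le> f y)}"

definition ext :: "'a set \<Rightarrow> 'a rel \<Rightarrow> nat" where
  "ext A r = card (linext A r)"

definition restr :: "'a rel \<Rightarrow> 'a set \<Rightarrow> 'a rel" where
  "restr r B = r \<inter> (B \<times> B)"

definition sum_decomposable :: "'a set \<Rightarrow> 'a rel \<Rightarrow> bool" where
  "sum_decomposable A r \<longleftrightarrow> (\<exists>B C. B \<noteq> {} \<and> C \<noteq> {} \<and> B \<inter> C = {} \<and> B \<union> C = A \<and>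
      (\<forall>x\<in>B. \<forall>y\<in>C. (x, y) \<notin> r \<and> (y, x) \<notin> r))"

text \<open>(A,r) = P 1 + ... + P k: the P i partition A and elements of different
  summands are incomparable (the order on each summand is the induced one).\<close>
definition is_disjoint_sum :: "'a set \<Rightarrow> 'a rel \<Rightarrow> nat \<Rightarrow> (nat \<Rightarrow> 'a set) \<Rightarrow> bool" where
  "is_disjoint_sum A r k P \<longleftrightarrow>
     A = (\<Union>i\<in>{1..k}. P i) \<and>
     (\<forall>i\<in>{1..k}. \<forall>j\<in>{1..k}. i \<noteq> j \<longrightarrow> P i \<inter> P j = {}) \<and>
     (\<forall>i\<in>{1..k}. \<forall>j\<in>{1..k}. i \<noteq> j \<longrightarrow> (\<forall>x\<in>P i. \<forall>y\<in>P j. (x, y) \<notin> r))"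

end

theory Submission imports Defs "HOL-Library.FuncSet" "HOL-Library.Disjoint_Sets" begin

text \<open>
  Splitting off the \<open>m\<close> singleton summands \<open>S\<close> from the rest \<open>Q\<close> gives
  \<open>ext(P) \<le> C(n,m) \<cdot> m! \<cdot> ext(Q)\<close>, so it suffices to show \<open>ext(Q) \<cdot> |Q| \<le> |Q|!\<close>.
  For a summand \<open>B\<close> that is not itself a disjoint sum, following a linear extension
  by one of the \<open>|B|\<close> cyclic rotations of the positions gives \<open>ext(B) \<cdot> |B|\<close> distinct
  total orders of \<open>B\<close>: a nontrivial rotation relating two linear extensions would cut
  \<open>B\<close> into two mutually incomparable pieces.  The bound \<open>ext \<cdot> card \<le> card!\<close> passes to
  disjoint unions of pieces of size at least two, since \<open>a + b \<le> a b\<close> there; choosing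
  the largest summand last makes every tail union of summands of \<open>Q\<close> this large.

  The splitting bound \<open>ext(B \<union> C) \<le> C(|B \<union> C|, |B|) ext(B) ext(C)\<close> holds for every
  partition.
\<close>

lemma linext_inj_on: "f \<in> linext A r \<Longrightarrow> inj_on f A"
  unfolding linext_def bij_betw_def by auto

lemma finite_linext:
  assumes "finite A" shows "finite (linext A r)"
proof -
  have "inj_on (\<lambda>f. restrict f A) (linext A r)"
    by (rule inj_onI) (auto simp: linext_def fun_eq_iff restrict_def split: if_splits, metis)
  moreover have "(\<lambda>f. restrict f A) ` linext A r \<subseteq> PiE A (\<lambda>_. {0..<card A})"
    unfolding linext_def by (auto simp: bij_betw_def)
  ultimately show ?thesis
    using assms by (meson finite_PiE finite_atLeastLessThan finite_imageD finite_subset)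
qed

lemma bij_betw_card_less:
  fixes g :: "'a \<Rightarrow> 'b::linorder"
  assumes "finite B" "inj_on g B"
  shows "bij_betw (\<lambda>x. card {y\<in>B. g y < g x}) B {0..<card B}"
proof -
  let ?rk = "\<lambda>x. card {y\<in>B. g y < g x}"
  have less: "?rk x < ?rk y" if "x \<in> B" "y \<in> B" "g x < g y" for x y
    by (rule psubset_card_mono) (use assms that in auto)
  have inj: "inj_on ?rk B"
  proof (rule inj_onI)
    fix x y assume "x \<in> B" "y \<in> B" "?rk x = ?rk y"
    then show "x = y"
      using less[of x y] less[of y x] inj_onD[OF assms(2)] by (cases "g x" "g y" rule: linorder_cases) auto
  qed
  have "?rk ` B \<subseteq> {0..<card B}"
    using assms(1) by (auto intro!: psubset_card_mono)
  then have "?rk ` B = {0..<card B}"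
    using inj by (simp add: card_image card_subset_eq)
  with inj show ?thesis by (simp add: bij_betw_def)
qed

definition rank_in :: "('a \<Rightarrow> nat) \<Rightarrow> 'a set \<Rightarrow> 'a \<Rightarrow> nat" where
  "rank_in f B x = (if x \<in> B then card {y\<in>B. f y < f x} else 0)"

lemma rank_in_linext:
  assumes "finite A" "f \<in> linext A r" "B \<subseteq> A"
  shows "rank_in f B \<in> linext B r"
proof -
  have "bij_betw (\<lambda>x. card {y\<in>B. f y < f x}) B {0..<card B}"
    using bij_betw_card_less[OF finite_subset[OF assms(3,1)]]
      inj_on_subset[OF linext_inj_on[OF assms(2)] assms(3)] .
  then have "bij_betw (rank_in f B) B {0..<card B}"
    by (rule bij_betw_cong[THEN iffD1, rotated]) (simp add: rank_in_def)
  moreover have "rank_in f B x \<le> rank_in f B y" if "x \<in> B" "y \<in> B" "(x, y) \<in> r" for x y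
  proof -
    have "f x \<le> f y" using assms that unfolding linext_def by blast
    then show ?thesis
      using that finite_subset[OF assms(3,1)] unfolding rank_in_def by (auto intro!: card_mono)
  qed
  ultimately show ?thesis unfolding linext_def by (auto simp: rank_in_def)
qed

lemma rank_in_eq_card_image:
  assumes "f \<in> linext A r" "D \<subseteq> A" "x \<in> D"
  shows "rank_in f D x = card {s\<in>f ` D. s < f x}"
proof -
  have "inj_on f {y\<in>D. f y < f x}"
    by (rule inj_on_subset[OF linext_inj_on[OF assms(1)]]) (use assms(2) in auto)
  moreover have "f ` {y\<in>D. f y < f x} = {s\<in>f ` D. s < f x}" by auto
  ultimately show ?thesis using assms(3) card_image by (fastforce simp: rank_in_def)
qed

lemma linext_eq_by_image_and_rank_in:
  assumes "finite A" "f \<in> linext A r" "g \<in> linext A r" "D \<subseteq> A" "x \<in> D"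
    and "f ` D = g ` D" "rank_in f D x = rank_in g D x"
  shows "f x = g x"
proof -
  let ?S = "f ` D"
  have "inj_on (\<lambda>t. card {s\<in>?S. s < t}) ?S"
    using bij_betw_card_less[of ?S id] assms(1,4)
    by (simp add: bij_betw_def finite_subset)
  moreover have "card {s\<in>?S. s < f x} = card {s\<in>?S. s < g x}"
    using rank_in_eq_card_image[OF assms(2,4,5)] rank_in_eq_card_image[OF assms(3,4,5)]
      assms(6,7) by simp
  moreover have "f x \<in> ?S" "g x \<in> ?S" using assms(5,6) by auto
  ultimately show ?thesis by (rule inj_onD)
qed

lemma linext_eq_by_restrictions:
  assumes "finite A" "A = B \<union> C" "B \<inter> C = {}" "f \<in> linext A r" "g \<in> linext A r"
    and "f ` B = g ` B" "rank_in f B = rank_in g B" "rank_in f C = rank_in g C"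
  shows "f = g"
proof
  fix x
  have "f ` A = {0..<card A}" "g ` A = {0..<card A}"
    using assms(4,5) unfolding linext_def bij_betw_def by auto
  moreover have "f ` C = f ` A - f ` B"
    using linext_inj_on[OF assms(4)] assms(2,3) by (auto simp: inj_on_def)
  moreover have "g ` C = g ` A - g ` B"
    using linext_inj_on[OF assms(5)] assms(2,3) by (auto simp: inj_on_def)
  ultimately have fC: "f ` C = g ` C" using assms(6) by simp
  consider "x \<in> B" | "x \<in> C" | "x \<notin> A" using assms(2) by blast
  then show "f x = g x"
  proof cases
    case 1
    then show ?thesis
      using linext_eq_by_image_and_rank_in[OF assms(1,4,5) _ 1 assms(6)] assms(2,7) by simp
  next
    case 2
    then show ?thesis
      using linext_eq_by_image_and_rank_in[OF assms(1,4,5) _ 2 fC] assms(2,8) by simp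
  next
    case 3
    then show ?thesis using assms(4,5) unfolding linext_def by auto
  qed
qed

text \<open>A linear extension of \<open>B \<union> C\<close> is determined by the positions occupied by \<open>B\<close>
  together with the linear extensions it induces on \<open>B\<close> and on \<open>C\<close>.\<close>
lemma ext_Un_le:
  assumes "finite A" "A = B \<union> C" "B \<inter> C = {}"
  shows "ext A r \<le> (card A choose card B) * ext B r * ext C r"
proof -
  let ?n = "card A"
  define \<Phi> where "\<Phi> f = (f ` B, rank_in f B, rank_in f C)" for f :: "'a \<Rightarrow> nat"
  let ?T = "{S. S \<subseteq> {0..<?n} \<and> card S = card B} \<times> linext B r \<times> linext C r"
  have sub: "\<Phi> ` linext A r \<subseteq> ?T"
  proof
    fix t assume "t \<in> \<Phi> ` linext A r"
    then obtain f where f: "f \<in> linext A r" "t = \<Phi> f" by auto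
    have "f ` B \<subseteq> {0..<?n}" using f(1) assms(2) unfolding linext_def bij_betw_def by auto
    moreover have "card (f ` B) = card B"
      using linext_inj_on[OF f(1)] assms(2) by (meson card_image inj_on_subset sup_ge1)
    ultimately show "t \<in> ?T" using f rank_in_linext[OF assms(1) f(1)] assms(2)
      by (auto simp: \<Phi>_def)
  qed
  have "inj_on \<Phi> (linext A r)"
    by (rule inj_onI) (use linext_eq_by_restrictions[OF assms] in \<open>auto simp: \<Phi>_def\<close>)
  then have "ext A r = card (\<Phi> ` linext A r)" unfolding ext_def by (simp add: card_image)
  also have "\<dots> \<le> card ?T"
    using sub assms(1,2) finite_linext[of B r] finite_linext[of C r] by (intro card_mono) auto
  also have "\<dots> = (?n choose card B) * ext B r * ext C r"
    by (simp add: card_cartesian_product n_subsets ext_def)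
  finally show ?thesis .
qed

lemma ext_le_one:
  assumes "A \<subseteq> {x}" shows "ext A r \<le> 1"
proof -
  have "card A \<le> 1" using card_mono[OF _ assms] by simp
  have "f = (\<lambda>_. 0)" if "f \<in> linext A r" for f
  proof
    fix y
    have "y \<in> A \<Longrightarrow> f y < card A" using that unfolding linext_def bij_betw_def by auto
    then show "f y = 0" using that \<open>card A \<le> 1\<close> unfolding linext_def by fastforce
  qed
  then have "linext A r \<subseteq> {\<lambda>_. 0}" by blast
  from card_mono[OF _ this] show ?thesis unfolding ext_def by simp
qed

lemma ext_le_fact: "finite A \<Longrightarrow> ext A r \<le> fact (card A)"
proof (induction A rule: finite_induct)
  case empty
  then show ?case using ext_le_one[of "{}"] by simp
next
  case (insert x F)
  have "ext (insert x F) r \<le> (card (insert x F) choose card {x}) * ext {x} r * ext F r"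
    by (rule ext_Un_le) (use insert in auto)
  also have "\<dots> \<le> (card F + 1) * 1 * fact (card F)"
    using insert ext_le_one[of "{x}" x r] by (intro mult_mono) auto
  also have "\<dots> = fact (card (insert x F))" using insert by simp
  finally show ?case .
qed

lemma mod_less_double: "(t::nat) < 2 * N \<Longrightarrow> t mod N = (if t < N then t else t - N)"
  by (simp add: le_mod_geq)

lemma bij_betw_add_mod:
  fixes c N :: nat
  assumes "c < N" shows "bij_betw (\<lambda>t. (t + c) mod N) {0..<N} {0..<N}"
proof -
  have "inj_on (\<lambda>t. (t + c) mod N) {0..<N}"
    using assms by (auto simp: inj_on_def mod_less_double split: if_splits)
  then show ?thesis
    using assms by (simp add: bij_betw_def endo_inj_surj image_subset_iff)
qed

lemma add_mod_eq_add_mod_imp: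
  fixes a b c d N :: nat
  assumes "a < N" "b < N" "c < N" "d \<le> c" "(a + c) mod N = (b + d) mod N"
  shows "b = (a + (c - d)) mod N"
  using assms mod_less_double[of "a + c" N] mod_less_double[of "b + d" N]
    mod_less_double[of "a + (c - d)" N]
  by (auto split: if_splits)

definition rotate_positions :: "'a set \<Rightarrow> nat \<Rightarrow> ('a \<Rightarrow> nat) \<Rightarrow> 'a \<Rightarrow> nat" where
  "rotate_positions B c f x = (if x \<in> B then (f x + c) mod card B else 0)"

lemma rotate_positions_in_linext_empty:
  assumes "f \<in> linext B r" "c < card B"
  shows "rotate_positions B c f \<in> linext B {}"
proof -
  have "bij_betw ((\<lambda>t. (t + c) mod card B) \<circ> f) B {0..<card B}"
    using assms unfolding linext_def by (blast intro: bij_betw_trans bij_betw_add_mod)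
  then have "bij_betw (rotate_positions B c f) B {0..<card B}"
    by (rule bij_betw_cong[THEN iffD1, rotated]) (simp add: rotate_positions_def)
  then show ?thesis unfolding linext_def by (simp add: rotate_positions_def)
qed

lemma not_sum_decomposableE:
  assumes "\<not> sum_decomposable B (restr r B)" "X \<subseteq> B" "X \<noteq> {}" "X \<noteq> B"
  obtains x y where "x \<in> X" "y \<in> B - X" "(x, y) \<in> r \<or> (y, x) \<in> r"
proof -
  have "sum_decomposable B (restr r B)"
    if "\<forall>x\<in>X. \<forall>y\<in>B - X. (x, y) \<notin> r \<and> (y, x) \<notin> r"
    unfolding sum_decomposable_def restr_def
    using that assms(2-4) by (intro exI[of _ X] exI[of _ "B - X"]) auto
  with assms(1) that show ?thesis by blast
qed

text \<open>The elements that the rotation moves past the last position and those it does not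
  would be two mutually incomparable parts of \<open>B\<close>.\<close>
lemma linext_rotation_trivial:
  assumes "\<not> sum_decomposable B (restr r B)" "f \<in> linext B r" "g \<in> linext B r"
    and "s < card B" "\<forall>x\<in>B. g x = (f x + s) mod card B"
  shows "s = 0"
proof (rule ccontr)
  assume "s \<noteq> 0"
  let ?N = "card B"
  have f_image: "f ` B = {0..<?N}" using assms(2) unfolding linext_def bij_betw_def by auto
  then have f_less: "f x < ?N" if "x \<in> B" for x using that by auto
  define X where "X = {x\<in>B. ?N \<le> f x + s}"
  have "?N - 1 \<in> f ` B" "0 \<in> f ` B" using f_image assms(4) by auto
  then obtain x0 y0 where "x0 \<in> B" "f x0 = ?N - 1" "y0 \<in> B" "f y0 = 0"
    by (metis imageE)
  then have "x0 \<in> X" "y0 \<notin> X" using \<open>s \<noteq> 0\<close> assms(4) by (auto simp: X_def)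
  then obtain x y where xy: "x \<in> X" "y \<in> B - X" "(x, y) \<in> r \<or> (y, x) \<in> r"
    using not_sum_decomposableE[OF assms(1), of X] \<open>y0 \<in> B\<close> by (auto simp: X_def)
  then have B: "x \<in> B" "y \<in> B" by (auto simp: X_def)
  show False using xy(3)
  proof
    assume "(x, y) \<in> r"
    then have "f x \<le> f y" using assms(2) B unfolding linext_def by blast
    then show False using xy by (auto simp: X_def)
  next
    assume "(y, x) \<in> r"
    then have "g y \<le> g x" using assms(3) B unfolding linext_def by blast
    moreover have "g x = f x + s - ?N" "g y = f y + s"
      using xy(1,2) assms(4,5) B f_less[OF B(1)] f_less[OF B(2)] mod_less_double[of "f x + s" ?N]
        mod_less_double[of "f y + s" ?N] by (auto simp: X_def)
    ultimately show False using f_less[OF B(1)] \<open>s \<noteq> 0\<close> by linarith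
  qed
qed

lemma rotate_positions_eq_imp_eq:
  assumes "\<not> sum_decomposable B (restr r B)" and f: "f \<in> linext B r" and g: "g \<in> linext B r"
    and "c < card B" "d < card B" "rotate_positions B c f = rotate_positions B d g"
  shows "f = g \<and> c = d"
proof -
  have eq: "(f x + c) mod card B = (g x + d) mod card B" if "x \<in> B" for x
    using fun_cong[OF assms(6), of x] that by (simp add: rotate_positions_def)
  have less: "f x < card B" "g x < card B" if "x \<in> B" for x
    using f g that unfolding linext_def bij_betw_def by auto
  have "c - d = 0" if "d \<le> c"
  proof (rule linext_rotation_trivial[OF assms(1) f g])
    show "c - d < card B" using \<open>c < card B\<close> by simp
    show "\<forall>x\<in>B. g x = (f x + (c - d)) mod card B"
      using add_mod_eq_add_mod_imp[OF less(1,2) \<open>c < card B\<close> that eq] by blast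
  qed
  moreover have "d - c = 0" if "c \<le> d"
  proof (rule linext_rotation_trivial[OF assms(1) g f])
    show "d - c < card B" using \<open>d < card B\<close> by simp
    show "\<forall>x\<in>B. f x = (g x + (d - c)) mod card B"
      using add_mod_eq_add_mod_imp[OF less(2,1) \<open>d < card B\<close> that eq[symmetric]] by blast
  qed
  ultimately have "c = d" by linarith
  moreover have "f x = g x" for x
  proof (cases "x \<in> B")
    case True
    then show ?thesis
      using add_mod_eq_add_mod_imp[OF less(1,2) \<open>c < card B\<close> _ eq] \<open>c = d\<close> less by simp
  next
    case False
    then show ?thesis using f g unfolding linext_def by auto
  qed
  ultimately show ?thesis by auto
qed

lemma ext_mult_card_le_fact:
  assumes "finite B" "\<not> sum_decomposable B (restr r B)"
  shows "ext B r * card B \<le> fact (card B)"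
proof -
  let ?rot = "\<lambda>(f, c). rotate_positions B c f"
  have "ext B r * card B = card (linext B r \<times> {0..<card B})"
    by (simp add: ext_def card_cartesian_product)
  also have "\<dots> = card (?rot ` (linext B r \<times> {0..<card B}))"
    using rotate_positions_eq_imp_eq[OF assms(2)]
    by (intro card_image[symmetric] inj_onI) auto
  also have "\<dots> \<le> ext B {}"
    unfolding ext_def
    by (rule card_mono[OF finite_linext[OF assms(1)]])
      (auto intro: rotate_positions_in_linext_empty)
  also have "\<dots> \<le> fact (card B)" using ext_le_fact[OF assms(1)] .
  finally show ?thesis .
qed

lemma ext_Un_mult_le_fact:
  assumes "finite B" "finite C" "B \<inter> C = {}"
    and "ext B r * u \<le> fact (card B)" "ext C r * v \<le> fact (card C)"
  shows "ext (B \<union> C) r * (u * v) \<le> fact (card (B \<union> C))"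
proof -
  let ?a = "card B" and ?b = "card C"
  have card_Un: "card (B \<union> C) = ?a + ?b" using assms(1-3) by (simp add: card_Un_disjoint)
  have "ext (B \<union> C) r * (u * v) \<le> ((?a + ?b) choose ?a) * ext B r * ext C r * (u * v)"
    using ext_Un_le[of "B \<union> C" B C r] assms(1-3) card_Un by simp
  also have "\<dots> = ((?a + ?b) choose ?a) * (ext B r * u) * (ext C r * v)"
    by (simp add: ac_simps)
  also have "\<dots> \<le> ((?a + ?b) choose ?a) * fact ?a * fact ?b"
    using assms(4,5) by (intro mult_mono) auto
  also have "\<dots> = fact (card (B \<union> C))"
    using binomial_fact_lemma[of ?a "?a + ?b"] card_Un by (simp add: algebra_simps)
  finally show ?thesis .
qed

lemma ext_UN_mult_card_le_fact:
  fixes j k :: nat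
  assumes "j \<le> k" "\<forall>i\<in>{j..k}. finite (X i)" "disjoint_family_on X {j..k}"
    and "\<forall>i\<in>{j..k}. \<not> sum_decomposable (X i) (restr r (X i))"
    and "\<forall>i\<in>{j..<k}. 2 \<le> card (X i) \<and> card (X i) \<le> card (X k)"
  shows "ext (\<Union>i\<in>{j..k}. X i) r * card (\<Union>i\<in>{j..k}. X i)
           \<le> fact (card (\<Union>i\<in>{j..k}. X i))"
  using assms
proof (induction j rule: inc_induct)
  case base
  then show ?case using ext_mult_card_le_fact by simp
next
  case (step j)
  let ?U = "\<Union>i\<in>{Suc j..k}. X i"
  have "{j..k} = insert j {Suc j..k}" using step.hyps by auto
  then have split: "(\<Union>i\<in>{j..k}. X i) = X j \<union> ?U"
    and disj: "X j \<inter> ?U = {}" and "disjoint_family_on X {Suc j..k}"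
    using step.prems(2) disjoint_family_on_insert[of j "{Suc j..k}" X] by auto
  have fin_j: "finite (X j)" and fin: "finite ?U" using step.prems(1) step.hyps by auto
  have "ext ?U r * card ?U \<le> fact (card ?U)"
    using step.IH \<open>disjoint_family_on X {Suc j..k}\<close> step.prems(1,3,4) by auto
  moreover have "ext (X j) r * card (X j) \<le> fact (card (X j))"
    using ext_mult_card_le_fact[OF fin_j] step.prems(3) step.hyps by simp
  ultimately have "ext (X j \<union> ?U) r * (card (X j) * card ?U) \<le> fact (card (X j \<union> ?U))"
    by (rule ext_Un_mult_le_fact[OF fin_j fin disj, rotated])
  moreover have "X k \<subseteq> ?U" using step.hyps by force
  then have "card (X k) \<le> card ?U" by (rule card_mono[OF fin])
  then have "2 \<le> card (X j)" "2 \<le> card ?U" using step.prems(4) step.hyps by auto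
  then have "card (X j) * 2 \<le> card (X j) * card ?U" "2 * card ?U \<le> card (X j) * card ?U"
    by simp_all
  then have "card (X j) + card ?U \<le> card (X j) * card ?U" by linarith
  ultimately show ?case
    unfolding split card_Un_disjoint[OF fin_j fin disj]
    by (meson le_trans mult_le_mono2)
qed

lemma ext_Un_le_fact_div:
  assumes "finite S" "finite Q" "S \<inter> Q = {}" "Q \<noteq> {}"
    and "ext Q r * card Q \<le> fact (card Q)"
  shows "real (ext (S \<union> Q) r) \<le> fact (card (S \<union> Q)) / card Q"
proof -
  have "ext (S \<union> Q) r * (1 * card Q) \<le> fact (card (S \<union> Q))"
    using ext_Un_mult_le_fact[OF assms(1-3) _ assms(5), of 1] ext_le_fact[OF assms(1), of r] by simp
  then have "real (ext (S \<union> Q) r) * card Q \<le> fact (card (S \<union> Q))"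
    by (metis mult_1 of_nat_fact of_nat_le_iff of_nat_mult)
  moreover have "0 < card Q" using assms(2,4) by (simp add: card_gt_0_iff)
  ultimately show ?thesis by (simp add: le_divide_eq)
qed

lemma is_disjoint_sumD:
  assumes "is_disjoint_sum A r k P"
  shows "A = (\<Union>i\<in>{1..k}. P i)" "disjoint_family_on P {1..k}"
  using assms unfolding is_disjoint_sum_def disjoint_family_on_def by auto

theorem lemma6p2:
  fixes A :: "'a set" and r :: "'a rel" and P :: "nat \<Rightarrow> 'a set" and n k m :: nat
  assumes "finite A" and "partial_order_on A r" and "card A = n"
    and "k \<ge> 1"
    and "is_disjoint_sum A r k P"
    and "\<forall>i\<in>{1..k}. P i \<noteq> {} \<and> \<not> sum_decomposable (P i) (restr r (P i))"
    and "\<forall>i\<in>{1..k}. card (P i) \<le> card (P k)"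
    and "m \<le> k - 1"
    and "\<forall>i\<in>{1..m}. card (P i) = 1"
    and "\<forall>i\<in>{m+1..k-1}. card (P i) \<noteq> 1"
  shows "real (ext A r) \<le> fact n / real (n - m)"
proof -
  define S where "S = (\<Union>i\<in>{1..m}. P i)"
  define Q where "Q = (\<Union>i\<in>{m+1..k}. P i)"
  have "m < k" using assms(4,8) by linarith
  then have idx: "{1..k} = {1..m} \<union> {m+1..k}" by auto
  note A_UN = is_disjoint_sumD(1)[OF assms(5)] and disj = is_disjoint_sumD(2)[OF assms(5)]
  have fin: "\<forall>i\<in>{1..k}. finite (P i)" using assms(1) A_UN by simp
  have A: "A = S \<union> Q" unfolding A_UN idx S_def Q_def by (rule UN_Un)
  have "P i \<inter> P j = {}" if "i \<in> {1..m}" "j \<in> {m+1..k}" for i j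
    using disjoint_family_onD[OF disj, of i j] that \<open>m < k\<close> by auto
  then have SQ: "S \<inter> Q = {}" unfolding S_def Q_def by blast
  have "card S = (\<Sum>i\<in>{1..m}. card (P i))"
    unfolding S_def using \<open>m < k\<close> fin
    by (intro card_UN_disjoint' disjoint_family_on_mono[OF _ disj]) auto
  then have "card S = m" using assms(9) by simp
  then have "card Q = n - m" using A SQ assms(1,3) by (simp add: card_Un_disjoint)
  have "Q \<noteq> {}" using assms(6) \<open>m < k\<close> by (auto simp: Q_def)
  have two_le_card: "2 \<le> card (P i)" if "i \<in> {m+1..<k}" for i
  proof -
    have "i \<in> {1..k}" "i \<in> {m+1..k-1}" using that by auto
    then have "card (P i) \<noteq> 0" "card (P i) \<noteq> 1" using fin assms(6,10) by auto
    then show ?thesis by linarith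
  qed
  have "ext Q r * card Q \<le> fact (card Q)"
    unfolding Q_def using \<open>m < k\<close> fin assms(6,7) two_le_card
    by (intro ext_UN_mult_card_le_fact disjoint_family_on_mono[OF _ disj]) auto
  then show ?thesis
    using ext_Un_le_fact_div[of S Q r] A SQ assms(1,3) \<open>Q \<noteq> {}\<close> \<open>card Q = n - m\<close> by simp
qed

end
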